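(* Let $\mathcal{V}$ be a finite set with $|\mathcal{V}|\ge 2$, and for a logit vector $\boldsymbol{z}\in\mathbb{R}^{|\mathcal{V}|}$ let $\pi_{\boldsymbol{z}}(a)=\frac{\exp z_a}{\sum_{a'\in\mathcal{V}}\exp z_{a'}}$. (i) For any fixed target action $a\in\mathcal{V}$, the SFT loss $\mathcal{L}_{\text{SFT}}(\boldsymbol{z})=-\log\pi_{\boldsymbol{z}}(a)$ is a convex function of $\boldsymbol{z}\in\mathbb{R}^{|\mathcal{V}|}$ (its Hessian in $\boldsymbol{z}$ is positive semi-definite everywhere). (ii) Fix a sampled action $a\in\mathcal{V}$, a behavioral probability $\pi_{\text{old}}(a)\in(0,1]$, an advantage value $A\neq 0$ and a clip range $\epsilon\in(0,1)$. Let $r(\boldsymbol{z})=\pi_{\boldsymbol{z}}(a)/\pi_{\text{old}}(a)$ and $$\mathcal{L}_{\text{PPO}}(\boldsymbol{z})=-\min\bigl(r(\boldsymbol{z})A,\ \mathrm{clip}(r(\boldsymbol{z}),1-\epsilon,1+\epsilon)A\bigr),$$ where $\mathrm{clip}(x,l,u)=\min(\max(x,l),u)$. Then $\mathcal{L}_{\text{PPO}}$ is not a convex function of $\boldsymbol{z}$: its Hessian with respect to $\boldsymbol{z}$ fails to be positive semi-definite at some points where it is twice differentiable.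
   Context: A loss taking logits $\boldsymbol{z}$ as input is called logits convex if its Hessian with respect to $\boldsymbol{z}$ is positive semi-definite. The losses here are the single-time-step versions of the SFT negative log-likelihood and the PPO clipped surrogate objective. *)

theory Defs
  imports "HOL-Analysis.Analysis"
begin

definition softmax :: "real^'v \<Rightarrow> 'v::finite \<Rightarrow> real" where
  "softmax z a = exp (z $ a) / (\<Sum>b\<in>UNIV. exp (z $ b))"

definition clip :: "real \<Rightarrow> real \<Rightarrow> real \<Rightarrow> real" where
  "clip x l u = min (max x l) u"

definition sft_loss :: "'v::finite \<Rightarrow> real^'v \<Rightarrow> real" where
  "sft_loss a z = - ln (softmax z a)"

text \<open>Single-step PPO clipped loss: sampled action a, old probability p0,
  advantage A, clip range eps.\<close>
definition ppo_loss :: "'v::finite \<Rightarrow> real \<Rightarrow> real \<Rightarrow> real \<Rightarrow> real^'v \<Rightarrow> real" where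
  "ppo_loss a p0 A eps z =
     (let r = softmax z a / p0 in - min (r * A) (clip r (1 - eps) (1 + eps) * A))"

definition has_hessian :: "(real^'n \<Rightarrow> real) \<Rightarrow> real^'n^'n \<Rightarrow> real^'n \<Rightarrow> bool" where
  "has_hessian f H z \<longleftrightarrow>
     (\<exists>S g. open S \<and> z \<in> S \<and> (\<forall>x\<in>S. (f has_derivative (\<lambda>h. g x \<bullet> h)) (at x))
        \<and> (g has_derivative (\<lambda>h. H *v h)) (at z))"

definition psd :: "real^'n^'n \<Rightarrow> bool" where
  "psd H \<longleftrightarrow> (\<forall>v. 0 \<le> v \<bullet> (H *v v))"

end

theory Submission
  imports Defs
begin

(* The SFT loss is log-sum-exp minus a coordinate, and log-sum-exp is convex (Hoelder's inequality,
   i.e. convexity of exp applied termwise after normalising both sums to 1). A convex function has a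
   monotone gradient, so every Hessian it has is positive semi-definite.
   For PPO, pick a probability q for the sampled action on the unclipped branch of the minimum
   (q < min p0 (1/2) if A > 0, q > max (1/2) (p0 (1 - eps)) if A < 0). Near any z with
   softmax z a = q the loss equals -(A / p0) softmax z a, and the second derivative of softmax z a
   along e_a is q (1 - q) (1 - 2 q), so the choice of q makes the Hessian negative in the
   direction e_a; hence the loss is not convex either. *)

lemma DERIV_le_of_right_slopes_le:
  assumes "(\<phi> has_real_derivative D) (at x)"
    and "eventually (\<lambda>t. (\<phi> t - \<phi> x) / (t - x) \<le> B) (at_right x)"
  shows "D \<le> B"
proof (rule tendsto_upperbound)
  show "((\<lambda>t. (\<phi> t - \<phi> x) / (t - x)) \<longlongrightarrow> D) (at_right x)"
    using assms(1) unfolding has_field_derivative_iff by (rule tendsto_mono[OF at_le[OF subset_UNIV]])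
qed (use assms(2) in simp_all)

lemma DERIV_ge_of_right_slopes_ge:
  assumes "(\<phi> has_real_derivative D) (at x)"
    and "eventually (\<lambda>t. B \<le> (\<phi> t - \<phi> x) / (t - x)) (at_right x)"
  shows "B \<le> D"
proof (rule tendsto_lowerbound)
  show "((\<lambda>t. (\<phi> t - \<phi> x) / (t - x)) \<longlongrightarrow> D) (at_right x)"
    using assms(1) unfolding has_field_derivative_iff by (rule tendsto_mono[OF at_le[OF subset_UNIV]])
qed (use assms(2) in simp_all)

lemma has_real_derivative_along_line:
  assumes "(f has_derivative f') (at x)"
  shows "((\<lambda>t. f (x + t *\<^sub>R v)) has_real_derivative f' v) (at 0)"
proof -
  have "((\<lambda>t. x + t *\<^sub>R v) has_derivative (\<lambda>t. t *\<^sub>R v)) (at 0)"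
    by (auto intro!: derivative_eq_intros)
  from has_derivative_compose[OF this]
  have "((\<lambda>t. f (x + t *\<^sub>R v)) has_derivative (\<lambda>t. f' (t *\<^sub>R v))) (at 0)"
    using assms by simp
  moreover have "f' (t *\<^sub>R v) = t * f' v" for t
    using has_derivative_linear[OF assms] by (simp add: linear_scale)
  ultimately show ?thesis
    unfolding has_field_derivative_def by (simp add: mult.commute[of _ "f' v"])
qed

lemma convex_on_above_tangent:
  fixes f :: "'a::real_normed_vector \<Rightarrow> real"
  assumes "convex_on UNIV f" and "(f has_derivative f') (at x)"
  shows "f x + f' (y - x) \<le> f y"
proof -
  have "f' (y - x) \<le> f y - f x"
  proof (rule DERIV_le_of_right_slopes_le[OF has_real_derivative_along_line[OF assms(2)]])
    have "(f (x + t *\<^sub>R (y - x)) - f (x + 0 *\<^sub>R (y - x))) / (t - 0) \<le> f y - f x"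
      if "t \<in> {0<..<1}" for t
    proof -
      have "f ((1 - t) *\<^sub>R x + t *\<^sub>R y) \<le> (1 - t) * f x + t * f y"
        using that by (intro convex_onD[OF assms(1)]) auto
      moreover have "(1 - t) *\<^sub>R x + t *\<^sub>R y = x + t *\<^sub>R (y - x)"
        by (simp add: algebra_simps)
      ultimately have "f (x + t *\<^sub>R (y - x)) - f x \<le> (f y - f x) * t"
        by (simp add: algebra_simps)
      with that show ?thesis
        by (simp add: pos_divide_le_eq)
    qed
    then show "\<forall>\<^sub>F t in at_right 0.
        (f (x + t *\<^sub>R (y - x)) - f (x + 0 *\<^sub>R (y - x))) / (t - 0) \<le> f y - f x"
      using eventually_at_right_real[of 0 1] by (auto elim: eventually_mono)
  qed
  then show ?thesis by simp
qed

lemma convex_on_gradient_monotone: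
  fixes f :: "'a::real_inner \<Rightarrow> real"
  assumes "convex_on UNIV f"
    and "(f has_derivative (\<lambda>h. u \<bullet> h)) (at x)" "(f has_derivative (\<lambda>h. w \<bullet> h)) (at y)"
  shows "0 \<le> (u - w) \<bullet> (x - y)"
  using convex_on_above_tangent[OF assms(1,2), of y] convex_on_above_tangent[OF assms(1,3), of x]
  by (simp add: inner_diff_left inner_diff_right)

lemma convex_on_has_hessian_psd:
  fixes f :: "real^'n \<Rightarrow> real"
  assumes "convex_on UNIV f" and "has_hessian f H z"
  shows "psd H"
  unfolding psd_def
proof
  fix v :: "real^'n"
  obtain S g where S: "open S" "z \<in> S"
    and grad: "\<And>x. x \<in> S \<Longrightarrow> (f has_derivative (\<lambda>h. g x \<bullet> h)) (at x)"
    and hess: "(g has_derivative (\<lambda>h. H *v h)) (at z)"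
    using assms(2) unfolding has_hessian_def by blast
  have deriv: "((\<lambda>t. g (z + t *\<^sub>R v) \<bullet> v) has_real_derivative (H *v v) \<bullet> v) (at 0)"
    using has_real_derivative_along_line[OF has_derivative_inner_left[OF hess]] .
  have "((\<lambda>t. z + t *\<^sub>R v) \<longlongrightarrow> z) (at_right 0)"
    by (auto intro!: tendsto_eq_intros)
  then have "eventually (\<lambda>t. z + t *\<^sub>R v \<in> S) (at_right 0)"
    using S by (rule topological_tendstoD)
  with eventually_at_right_less have "\<forall>\<^sub>F t in at_right 0.
    0 \<le> (g (z + t *\<^sub>R v) \<bullet> v - g (z + 0 *\<^sub>R v) \<bullet> v) / (t - 0)"
  proof eventually_elim
    fix t :: real
    assume "0 < t" and "z + t *\<^sub>R v \<in> S"
    have "0 \<le> (g (z + t *\<^sub>R v) - g z) \<bullet> ((z + t *\<^sub>R v) - z)"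
      using \<open>z + t *\<^sub>R v \<in> S\<close> S(2)
      by (intro convex_on_gradient_monotone[OF assms(1)] grad)
    with \<open>0 < t\<close> show "0 \<le> (g (z + t *\<^sub>R v) \<bullet> v - g (z + 0 *\<^sub>R v) \<bullet> v) / (t - 0)"
      by (simp add: inner_diff_left zero_le_mult_iff)
  qed
  with deriv have "0 \<le> (H *v v) \<bullet> v"
    by (rule DERIV_ge_of_right_slopes_ge)
  then show "0 \<le> v \<bullet> (H *v v)"
    by (simp add: inner_commute)
qed

lemma has_hessianI:
  assumes "open S" "z \<in> S" "\<And>x. x \<in> S \<Longrightarrow> (f has_derivative (\<lambda>h. g x \<bullet> h)) (at x)"
    and "g differentiable (at z)"
  shows "has_hessian f (jacobian g (at z)) z"
  unfolding has_hessian_def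
  using assms(1-3) jacobian_works[THEN iffD1, OF assms(4)] by blast

lemma jacobian_mult_vec:
  fixes g :: "real^'n \<Rightarrow> real^'m"
  assumes "(g has_derivative D) (at z)"
  shows "jacobian g (at z) *v h = D h"
  using has_derivative_unique[OF jacobian_works[THEN iffD1, OF differentiableI[OF assms]] assms]
  by (simp add: fun_eq_iff)

lemma has_hessian_transform_within_open:
  assumes "has_hessian f H z" "open U" "z \<in> U" "\<And>x. x \<in> U \<Longrightarrow> g x = f x"
  shows "has_hessian g H z"
proof -
  obtain S grad where S: "open S" "z \<in> S"
    and "\<And>x. x \<in> S \<Longrightarrow> (f has_derivative (\<lambda>h. grad x \<bullet> h)) (at x)"
    and "(grad has_derivative (\<lambda>h. H *v h)) (at z)"
    using assms(1) unfolding has_hessian_def by blast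
  then have "(g has_derivative (\<lambda>h. grad x \<bullet> h)) (at x)" if "x \<in> S \<inter> U" for x
    using that assms(2,4) has_derivative_transform_within_open[of f _ x UNIV U g] by auto
  moreover have "open (S \<inter> U)" "z \<in> S \<inter> U"
    using S assms(2,3) by auto
  ultimately show ?thesis
    using \<open>(grad has_derivative (\<lambda>h. H *v h)) (at z)\<close> unfolding has_hessian_def by blast
qed

definition exp_sum :: "real^'v::finite \<Rightarrow> real" where
  "exp_sum z = (\<Sum>b\<in>UNIV. exp (z $ b))"

definition softmax_vec :: "real^'v::finite \<Rightarrow> real^'v" where
  "softmax_vec z = (\<chi> j. softmax z j)"

lemma softmax_vec_nth [simp]: "softmax_vec z $ j = softmax z j"
  by (simp add: softmax_vec_def)

lemma exp_sum_pos: "0 < exp_sum z"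
  unfolding exp_sum_def by (intro sum_pos) auto

lemma softmax_eq: "softmax z a = exp (z $ a) / exp_sum z"
  by (simp add: softmax_def exp_sum_def)

lemma softmax_pos: "0 < softmax z a"
  unfolding softmax_eq using exp_sum_pos[of z] by simp

lemma inner_softmax_vec: "softmax_vec z \<bullet> h = (\<Sum>j\<in>UNIV. softmax z j * h $ j)"
  by (simp add: inner_vec_def)

lemma has_derivative_vec_nth: "((\<lambda>x. x $ i) has_derivative (\<lambda>h. h $ i)) F"
  by (rule bounded_linear_imp_has_derivative) (rule bounded_linear_vec_nth)

lemma has_derivative_vec_lambda:
  fixes f :: "'a::real_normed_vector \<Rightarrow> 'n::finite \<Rightarrow> real"
  assumes "\<And>i. ((\<lambda>x. f x i) has_derivative (\<lambda>h. f' h i)) F"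
  shows "((\<lambda>x. \<chi> i. f x i) has_derivative (\<lambda>h. \<chi> i. f' h i)) F"
proof -
  have vec: "(\<chi> i. u i) = (\<Sum>i\<in>UNIV. u i *\<^sub>R axis i 1)" for u :: "'n \<Rightarrow> real"
    by (simp add: vec_eq_iff axis_def if_distrib cong: if_cong)
  show ?thesis
    unfolding vec by (intro has_derivative_sum has_derivative_scaleR_left assms)
qed

lemma has_derivative_exp_sum:
  "(exp_sum has_derivative (\<lambda>h. \<Sum>b\<in>UNIV. h $ b * exp (x $ b))) (at x)"
  unfolding exp_sum_def[abs_def]
  by (intro has_derivative_sum has_derivative_exp has_derivative_vec_nth)

lemma has_derivative_softmax:
  "((\<lambda>x. softmax x i) has_derivative (\<lambda>h. softmax x i * (h $ i - softmax_vec x \<bullet> h))) (at x)"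
proof -
  have "((\<lambda>x. exp (x $ i) / exp_sum x) has_derivative
     (\<lambda>h. - exp (x $ i) * (inverse (exp_sum x) * (\<Sum>b\<in>UNIV. h $ b * exp (x $ b)) * inverse (exp_sum x))
          + (h $ i * exp (x $ i)) / exp_sum x)) (at x)"
    using exp_sum_pos[of x]
    by (intro has_derivative_divide has_derivative_exp has_derivative_vec_nth has_derivative_exp_sum) simp
  then show ?thesis
    unfolding softmax_eq[abs_def]
    by (rule has_derivative_eq_rhs)
      (use exp_sum_pos[of x] in \<open>auto simp: fun_eq_iff inner_softmax_vec softmax_eq field_simps
         sum_distrib_left sum_divide_distrib power2_eq_square sum_negf\<close>)
qed

lemma has_derivative_softmax_vec:
  "(softmax_vec has_derivative (\<lambda>h. \<chi> j. softmax x j * (h $ j - softmax_vec x \<bullet> h))) (at x)"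
  unfolding softmax_vec_def[abs_def]
  by (intro has_derivative_vec_lambda has_derivative_softmax[unfolded softmax_vec_def])

lemma continuous_on_softmax: "continuous_on UNIV (\<lambda>x. softmax x a)"
  using has_derivative_softmax
  by (intro continuous_at_imp_continuous_on ballI has_derivative_continuous) blast

lemma ex_softmax_eq:
  fixes a :: "'v::finite"
  assumes "2 \<le> CARD('v)" and "0 < q" "q < 1"
  shows "\<exists>z::real^'v. softmax z a = q"
proof -
  define m where "m = real (CARD('v) - 1)"
  have "1 \<le> m" using assms(1) by (simp add: m_def)
  define z :: "real^'v" where "z = ln (q * m / (1 - q)) *\<^sub>R axis a 1"
  have "exp_sum z = exp (z $ a) + (\<Sum>j\<in>UNIV - {a}. exp (z $ j))"
    unfolding exp_sum_def by (simp add: sum.remove)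
  also have "(\<Sum>j\<in>UNIV - {a}. exp (z $ j)) = m"
    by (simp add: z_def axis_def m_def card_Diff_singleton)
  finally have "softmax z a = q * m / (1 - q) / (q * m / (1 - q) + m)"
    using assms \<open>1 \<le> m\<close> by (simp add: softmax_eq z_def)
  also have "\<dots> = q"
    using assms \<open>1 \<le> m\<close> by (simp add: field_simps)
  finally show ?thesis ..
qed

lemma convex_on_ln_exp_sum: "convex_on UNIV (\<lambda>x::real^'v::finite. ln (exp_sum x))"
proof (rule convex_onI)
  fix t :: real and x y :: "real^'v"
  assume t: "0 < t" "t < 1"
  define A where "A = exp_sum x"
  define B where "B = exp_sum y"
  have "0 < A" "0 < B"
    using exp_sum_pos by (auto simp: A_def B_def)
  define K where "K = exp ((1 - t) * ln A + t * ln B)"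
  have "0 < K"
    by (simp add: K_def)
  have termwise: "exp ((1 - t) * x $ i + t * y $ i)
      \<le> K * ((1 - t) * (exp (x $ i) / A) + t * (exp (y $ i) / B))" for i
  proof -
    have "exp ((1 - t) * (x $ i - ln A) + t * (y $ i - ln B))
        \<le> (1 - t) * exp (x $ i - ln A) + t * exp (y $ i - ln B)"
      using convex_onD[OF exp_convex, of t "x $ i - ln A" "y $ i - ln B"] t by simp
    moreover have "exp ((1 - t) * x $ i + t * y $ i)
        = K * exp ((1 - t) * (x $ i - ln A) + t * (y $ i - ln B))"
      by (simp add: K_def flip: exp_add) (simp add: algebra_simps)
    ultimately show ?thesis
      using \<open>0 < A\<close> \<open>0 < B\<close> \<open>0 < K\<close> by (simp add: exp_diff)
  qed
  have "exp_sum ((1 - t) *\<^sub>R x + t *\<^sub>R y) = (\<Sum>i\<in>UNIV. exp ((1 - t) * x $ i + t * y $ i))"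
    by (simp add: exp_sum_def)
  also have "\<dots> \<le> (\<Sum>i\<in>UNIV. K * ((1 - t) * (exp (x $ i) / A) + t * (exp (y $ i) / B)))"
    by (rule sum_mono) (rule termwise)
  also have "\<dots> = K * ((1 - t) * (exp_sum x / A) + t * (exp_sum y / B))"
    by (simp add: exp_sum_def sum.distrib flip: sum_distrib_left sum_divide_distrib)
  also have "\<dots> = K"
    using \<open>0 < A\<close> \<open>0 < B\<close> by (simp add: A_def B_def)
  finally have "ln (exp_sum ((1 - t) *\<^sub>R x + t *\<^sub>R y)) \<le> ln K"
    using exp_sum_pos[of "(1 - t) *\<^sub>R x + t *\<^sub>R y"] \<open>0 < K\<close> by simp
  then show "ln (exp_sum ((1 - t) *\<^sub>R x + t *\<^sub>R y)) \<le> (1 - t) * ln (exp_sum x) + t * ln (exp_sum y)"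
    by (simp add: K_def A_def B_def)
qed simp

lemma sft_loss_eq: "sft_loss a x = ln (exp_sum x) - x $ a"
  using exp_sum_pos[of x] by (simp add: sft_loss_def softmax_eq ln_div)

lemma convex_on_sft_loss:
  fixes a :: "'v::finite"
  shows "convex_on UNIV (sft_loss a)"
proof -
  have "convex_on UNIV (\<lambda>x::real^'v. - x $ a)"
    by (rule convex_onI) (auto simp: algebra_simps)
  with convex_on_ln_exp_sum have "convex_on UNIV (\<lambda>x::real^'v. ln (exp_sum x) + - x $ a)"
    by (rule convex_on_add)
  then show ?thesis
    by (simp add: sft_loss_eq[abs_def])
qed

lemma has_derivative_sft_loss:
  "(sft_loss a has_derivative (\<lambda>h. (softmax_vec x - axis a 1) \<bullet> h)) (at x)"
proof -
  have "((\<lambda>x. ln (exp_sum x) - x $ a) has_derivative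
      (\<lambda>h. (\<Sum>b\<in>UNIV. h $ b * exp (x $ b)) * inverse (exp_sum x) - h $ a)) (at x)"
    by (intro has_derivative_diff has_derivative_ln has_derivative_exp_sum has_derivative_vec_nth exp_sum_pos)
  then show ?thesis
    unfolding sft_loss_eq[abs_def]
    by (rule has_derivative_eq_rhs)
      (simp add: fun_eq_iff inner_diff_left inner_softmax_vec inner_axis' softmax_eq divide_inverse
        sum_distrib_left mult_ac)
qed

lemma sft_loss_has_hessian: "\<exists>H. has_hessian (sft_loss a) H z"
proof -
  have "(\<lambda>x. softmax_vec x - axis a 1) differentiable (at z)"
    using has_derivative_softmax_vec by (intro differentiable_diff differentiable_const differentiableI)
  then show ?thesis
    using has_hessianI[OF open_UNIV UNIV_I has_derivative_sft_loss] by blast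
qed

lemma scaled_softmax_has_hessian_not_psd:
  fixes a :: "'v::finite"
  assumes "c * (1 - 2 * softmax z a) < 0" "softmax z a < 1"
  shows "\<exists>H. has_hessian (\<lambda>x. c * softmax x a) H z \<and> \<not> psd H"
proof -
  define e :: "real^'v" where "e = axis a 1"
  define p where "p = softmax z a"
  define grad where "grad x = (c * softmax x a) *\<^sub>R (e - softmax_vec x)" for x
  define D where "D h = (c * softmax z a) *\<^sub>R (0 - (\<chi> j. softmax z j * (h $ j - softmax_vec z \<bullet> h)))
    + (c * (softmax z a * (h $ a - softmax_vec z \<bullet> h))) *\<^sub>R (e - softmax_vec z)" for h
  have "((\<lambda>x. c * softmax x a) has_derivative (\<lambda>h. grad x \<bullet> h)) (at x)" for x
    using has_derivative_mult_right[OF has_derivative_softmax, of c a x]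
    by (rule has_derivative_eq_rhs)
      (simp add: fun_eq_iff grad_def e_def inner_axis' algebra_simps)
  moreover have grad_deriv: "(grad has_derivative D) (at z)"
    unfolding grad_def[abs_def] D_def[abs_def]
    by (intro has_derivative_scaleR has_derivative_mult_right has_derivative_softmax
        has_derivative_diff has_derivative_const has_derivative_softmax_vec)
  ultimately have hessian: "has_hessian (\<lambda>x. c * softmax x a) (jacobian grad (at z)) z"
    using differentiableI[OF grad_deriv] by (intro has_hessianI[OF open_UNIV UNIV_I])
  have "softmax_vec z \<bullet> e = p"
    by (simp add: e_def p_def inner_axis)
  then have "e \<bullet> (jacobian grad (at z) *v e) = - (c * p) * (p * (1 - p)) + c * (p * (1 - p)) * (1 - p)"
    by (simp add: jacobian_mult_vec[OF grad_deriv] D_def e_def p_def inner_add_right inner_diff_right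
        inner_axis')
  also have "\<dots> = c * (1 - 2 * p) * (p * (1 - p))"
    by (simp add: algebra_simps)
  also have "\<dots> < 0"
  proof (rule mult_neg_pos)
    show "c * (1 - 2 * p) < 0"
      using assms(1) by (simp add: p_def)
    show "0 < p * (1 - p)"
      using assms(2) softmax_pos[of z a] by (simp add: p_def)
  qed
  finally have "\<not> psd (jacobian grad (at z))"
    unfolding psd_def by (meson not_le)
  with hessian show ?thesis
    by blast
qed

lemma le_clip: "x \<le> u \<Longrightarrow> x \<le> clip x l u"
  by (simp add: clip_def)

lemma clip_le: "l \<le> x \<Longrightarrow> clip x l u \<le> x"
  by (simp add: clip_def)

lemma ppo_loss_eq_unclipped:
  assumes "A * (softmax x a / p0) \<le> A * clip (softmax x a / p0) (1 - eps) (1 + eps)"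
  shows "ppo_loss a p0 A eps x = - A / p0 * softmax x a"
  using assms by (simp add: ppo_loss_def Let_def min_def mult.commute)

lemma ppo_unclipped_interval:
  fixes p0 A eps :: real
  assumes "0 < p0" "p0 \<le> 1" "A \<noteq> 0" "0 < eps" "eps < 1"
  obtains I q where "open I" "q \<in> I" "0 < q" "q < 1" "0 < A * (1 - 2 * q)"
    and "\<And>r. r \<in> I \<Longrightarrow> A * (r / p0) \<le> A * clip (r / p0) (1 - eps) (1 + eps)"
proof (cases "0 < A")
  case True
  show ?thesis
  proof (rule that[of "{..<p0}" "p0 / 4"])
    fix r
    assume "r \<in> {..<p0}"
    then have "r / p0 \<le> 1"
      using assms by (simp add: divide_le_eq)
    then have "r / p0 \<le> 1 + eps"
      using assms by linarith
    with True show "A * (r / p0) \<le> A * clip (r / p0) (1 - eps) (1 + eps)"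
      by (intro mult_left_mono le_clip) auto
  qed (use assms True in auto)
next
  case False
  then have "A < 0"
    using assms(3) by simp
  define d where "d = p0 * (1 - eps)"
  have "d < p0 * 1"
    unfolding d_def using assms by (intro mult_strict_left_mono) auto
  then have "d < 1"
    using assms(2) by linarith
  have "0 < d"
    unfolding d_def using assms by simp
  show ?thesis
  proof (rule that[of "{d<..}" "(3 + d) / 4"])
    fix r
    assume "r \<in> {d<..}"
    then have "1 - eps \<le> r / p0"
      using assms by (simp add: d_def le_divide_eq mult.commute)
    with \<open>A < 0\<close> show "A * (r / p0) \<le> A * clip (r / p0) (1 - eps) (1 + eps)"
      by (intro mult_left_mono_neg clip_le) auto
  qed (use \<open>A < 0\<close> \<open>0 < d\<close> \<open>d < 1\<close> in \<open>auto intro: mult_neg_neg\<close>)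
qed

lemma ppo_loss_has_hessian_not_psd:
  fixes a :: "'v::finite"
  assumes "2 \<le> CARD('v)" "0 < p0" "p0 \<le> 1" "A \<noteq> 0" "0 < eps" "eps < 1"
  shows "\<exists>z H. has_hessian (ppo_loss a p0 A eps) H z \<and> \<not> psd H"
proof -
  obtain I q where I: "open I" "q \<in> I" "0 < q" "q < 1" "0 < A * (1 - 2 * q)"
    and unclipped: "\<And>r. r \<in> I \<Longrightarrow> A * (r / p0) \<le> A * clip (r / p0) (1 - eps) (1 + eps)"
    using ppo_unclipped_interval[OF assms(2-6)] by blast
  obtain z :: "real^'v" where z: "softmax z a = q"
    using ex_softmax_eq[OF assms(1) I(3,4)] by blast
  define U where "U = (\<lambda>x. softmax x a) -` I"
  have "open U"
    unfolding U_def using I(1) continuous_on_softmax by (rule open_vimage)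
  moreover have "z \<in> U"
    using z I(2) by (simp add: U_def)
  moreover have "ppo_loss a p0 A eps x = - A / p0 * softmax x a" if "x \<in> U" for x
    using that unclipped by (intro ppo_loss_eq_unclipped) (simp add: U_def)
  moreover have "- A / p0 * (1 - 2 * softmax z a) < 0"
    using z I(5) assms(2) by simp
  then obtain H where "has_hessian (\<lambda>x. - A / p0 * softmax x a) H z" "\<not> psd H"
    using scaled_softmax_has_hessian_not_psd z I(4) by blast
  ultimately show ?thesis
    using has_hessian_transform_within_open by blast
qed

theorem lemma4p5:
  fixes a :: "'v::finite"
  assumes "CARD('v) \<ge> 2"
  shows "(convex_on UNIV (sft_loss a)
          \<and> (\<forall>z. \<exists>H. has_hessian (sft_loss a) H z)
          \<and> (\<forall>z H. has_hessian (sft_loss a) H z \<longrightarrow> psd H))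
       \<and> (\<forall>p0 A eps. 0 < p0 \<and> p0 \<le> 1 \<and> A \<noteq> 0 \<and> 0 < eps \<and> eps < 1 \<longrightarrow>
            \<not> convex_on UNIV (ppo_loss a p0 A eps)
            \<and> (\<exists>z H. has_hessian (ppo_loss a p0 A eps) H z \<and> \<not> psd H))"
proof (intro conjI allI impI)
  show "convex_on UNIV (sft_loss a)"
    by (rule convex_on_sft_loss)
  show "\<exists>H. has_hessian (sft_loss a) H z" for z
    by (rule sft_loss_has_hessian)
  show "psd H" if "has_hessian (sft_loss a) H z" for z H
    using convex_on_sft_loss that by (rule convex_on_has_hessian_psd)
  fix p0 A eps :: real
  assume "0 < p0 \<and> p0 \<le> 1 \<and> A \<noteq> 0 \<and> 0 < eps \<and> eps < 1"
  then show "\<exists>z H. has_hessian (ppo_loss a p0 A eps) H z \<and> \<not> psd H"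
    using ppo_loss_has_hessian_not_psd[OF assms] by blast
  then show "\<not> convex_on UNIV (ppo_loss a p0 A eps)"
    using convex_on_has_hessian_psd by blast
qed

end
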